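(* Let $(X,\mathcal{S})$ be a finite set system with $|X|=n=2^k$ for an integer $k\ge1$, and let the packings $\mathcal{F}_j$, the chains $F_j(S)$, the classes $\mathcal{S}_i$ and the families $\mathcal{F}_j^i$ be as defined in the context. Then there is an absolute constant $c>0$ such that for every $1\le i\le k$, every $j$ with $i-1\le j\le k$, and every $F\in\mathcal{F}_j^i$, $$|F|\le c\,\frac{n}{2^{i-1}} .$$
   Context: $\triangle$ denotes symmetric difference. Construction: set $\mathcal{F}_0=\{\emptyset\}$, and for $j=1,\dots,k$ let $\mathcal{F}_j\subseteq\mathcal{S}$ be a family that is maximal under inclusion subject to $|F\triangle F'|>n/2^j$ for all distinct $F,F'\in\mathcal{F}_j$. For $S\in\mathcal{S}$ define the nearest-neighbor chain $F_k(S):=S$ and, for $j=k,k-1,\dots,1$, let $F_{j-1}(S)$ be an element of $\mathcal{F}_{j-1}$ minimizing $|F_j(S)\triangle F|$ over $F\in\mathcal{F}_{j-1}$. For $i=1,\dots,k$ let $\mathcal{S}_i=\{S\in\mathcal{S}: n/2^i\le|S|<n/2^{i-1}\}$, and for $j=i-1,\dots,k$ let $\mathcal{F}_j^i=\{F_j(S):S\in\mathcal{S}_i\}$. *)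

theory Defs
  imports Complex_Main
begin

definition symdiff :: "'a set \<Rightarrow> 'a set \<Rightarrow> 'a set" where
  "symdiff A B = (A - B) \<union> (B - A)"

definition separated :: "real \<Rightarrow> 'a set set \<Rightarrow> bool" where
  "separated d G \<longleftrightarrow> (\<forall>A\<in>G. \<forall>B\<in>G. A \<noteq> B \<longrightarrow> real (card (symdiff A B)) > d)"

definition maximal_packing :: "'a set set \<Rightarrow> real \<Rightarrow> 'a set set \<Rightarrow> bool" where
  "maximal_packing S d F \<longleftrightarrow> F \<subseteq> S \<and> separated d F \<and>
     (\<forall>G. F \<subseteq> G \<and> G \<subseteq> S \<and> separated d G \<longrightarrow> G = F)"

definition valid_construction ::
  "'a set \<Rightarrow> 'a set set \<Rightarrow> nat \<Rightarrow> (nat \<Rightarrow> 'a set set) \<Rightarrow> ('a set \<Rightarrow> nat \<Rightarrow> 'a set) \<Rightarrow> bool" where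
  "valid_construction X S k Fam chain \<longleftrightarrow>
     Fam 0 = {{}} \<and>
     (\<forall>j\<in>{1..k}. maximal_packing S (real (card X) / 2 ^ j) (Fam j)) \<and>
     (\<forall>T\<in>S. chain T k = T \<and>
        (\<forall>j\<in>{1..k}. chain T (j - 1) \<in> Fam (j - 1) \<and>
           (\<forall>F\<in>Fam (j - 1). card (symdiff (chain T j) (chain T (j - 1)))
                                \<le> card (symdiff (chain T j) F))))"

definition size_class :: "'a set \<Rightarrow> 'a set set \<Rightarrow> nat \<Rightarrow> 'a set set" where
  "size_class X S i = {T\<in>S. real (card X) / 2 ^ i \<le> real (card T) \<and>
                             real (card T) < real (card X) / 2 ^ (i - 1)}"

definition chain_family ::
  "'a set \<Rightarrow> 'a set set \<Rightarrow> ('a set \<Rightarrow> nat \<Rightarrow> 'a set) \<Rightarrow> nat \<Rightarrow> nat \<Rightarrow> 'a set set" where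
  "chain_family X S chain i j = (\<lambda>T. chain T j) ` size_class X S i"

end

theory Submission
  imports Defs
begin

text \<open>A maximal \<open>d\<close>-separated packing is also a \<open>d\<close>-covering, so the nearest-neighbour step
  from level \<open>j\<close> to level \<open>j - 1\<close> moves a set by at most \<open>n / 2^(j-1)\<close> elements (for \<open>j = 1\<close>
  the only candidate is \<open>{}\<close>, at distance at most \<open>n\<close>). Telescoping from \<open>F\<^sub>k(S) = S\<close> gives
  \<open>|F\<^sub>j(S)| \<le> |S| + 2n/2^j\<close>, and for \<open>S \<in> \<S>\<^sub>i\<close>, \<open>j \<ge> i - 1\<close> this is at most \<open>3n/2^(i-1)\<close>.\<close>

lemma symdiff_commute: "symdiff A B = symdiff B A"
  unfolding symdiff_def by auto

lemma symdiff_self [simp]: "symdiff A A = {}"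
  unfolding symdiff_def by auto

lemma symdiff_empty_right [simp]: "symdiff A {} = A"
  unfolding symdiff_def by auto

lemma card_le_card_add_card_symdiff:
  assumes "finite A" "finite B"
  shows "card B \<le> card A + card (symdiff A B)"
proof -
  have "B \<subseteq> A \<union> symdiff A B" unfolding symdiff_def by auto
  then have "card B \<le> card (A \<union> symdiff A B)"
    using assms by (intro card_mono) (auto simp: symdiff_def)
  also have "\<dots> \<le> card A + card (symdiff A B)" by (rule card_Un_le)
  finally show ?thesis .
qed

lemma maximal_packing_covers:
  assumes packing: "maximal_packing S d F" and "A \<in> S" "0 \<le> d"
  shows "\<exists>B\<in>F. real (card (symdiff A B)) \<le> d"
proof (cases "A \<in> F")
  case True
  then show ?thesis using \<open>0 \<le> d\<close> by (intro bexI[of _ A]) auto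
next
  case False
  have "F \<subseteq> insert A F" "insert A F \<subseteq> S" "insert A F \<noteq> F"
    using packing \<open>A \<in> S\<close> False unfolding maximal_packing_def by auto
  then have "\<not> separated d (insert A F)"
    using packing unfolding maximal_packing_def by blast
  then obtain P Q where PQ: "P \<in> insert A F" "Q \<in> insert A F" "P \<noteq> Q"
    and close: "real (card (symdiff P Q)) \<le> d"
    unfolding separated_def by (auto simp: not_less)
  have "separated d F" using packing unfolding maximal_packing_def by blast
  then have "\<not> (P \<in> F \<and> Q \<in> F)"
    using PQ(3) close unfolding separated_def by fastforce
  then consider "P = A" "Q \<in> F" | "Q = A" "P \<in> F"
    using PQ by blast
  then show ?thesis
  proof cases
    case 1
    then show ?thesis using close by blast
  next
    case 2
    then show ?thesis using close by (metis symdiff_commute)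
  qed
qed

context
  fixes X :: "'a set" and S k Fam chain
  assumes valid: "valid_construction X S k Fam chain"
begin

lemma family_zero: "Fam 0 = {{}}"
  using valid unfolding valid_construction_def by simp

lemma chain_top: "T \<in> S \<Longrightarrow> chain T k = T"
  using valid unfolding valid_construction_def by blast

lemma chain_nearest:
  assumes "T \<in> S" "j \<in> {1..k}"
  shows "chain T (j - 1) \<in> Fam (j - 1)"
    and "\<And>F. F \<in> Fam (j - 1) \<Longrightarrow>
           card (symdiff (chain T j) (chain T (j - 1))) \<le> card (symdiff (chain T j) F)"
  using valid assms unfolding valid_construction_def by blast+

lemma packing_level: "j \<in> {1..k} \<Longrightarrow> maximal_packing S (real (card X) / 2 ^ j) (Fam j)"
  using valid unfolding valid_construction_def by blast

lemma chain_mem: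
  assumes "T \<in> S" "1 \<le> j" "j \<le> k"
  shows "chain T j \<in> S"
proof (cases "j = k")
  case True
  then show ?thesis using assms(1) chain_top by simp
next
  case False
  then have "chain T j \<in> Fam j"
    using chain_nearest(1)[OF assms(1), of "Suc j"] assms by simp
  then show ?thesis
    using packing_level[of j] assms unfolding maximal_packing_def by auto
qed

lemma chain_step_symdiff_le:
  assumes fin: "finite X" and SX: "S \<subseteq> Pow X" and T: "T \<in> S" and j: "j \<in> {1..k}"
  shows "real (card (symdiff (chain T j) (chain T (j - 1)))) \<le> real (card X) / 2 ^ (j - 1)"
proof -
  have A: "chain T j \<in> S" using chain_mem T j by auto
  have "\<exists>B\<in>Fam (j - 1). real (card (symdiff (chain T j) B)) \<le> real (card X) / 2 ^ (j - 1)"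
  proof (cases "j = 1")
    case True
    have "card (chain T j) \<le> card X"
      using A SX fin by (intro card_mono) auto
    then show ?thesis using True family_zero by simp
  next
    case False
    then show ?thesis
      using j by (intro maximal_packing_covers[OF packing_level A]) auto
  qed
  then show ?thesis
    using chain_nearest(2)[OF T j] by (meson of_nat_le_iff order_trans)
qed

lemma chain_subset:
  assumes SX: "S \<subseteq> Pow X" and T: "T \<in> S" and "j \<le> k"
  shows "chain T j \<subseteq> X"
proof (cases "1 \<le> j")
  case True
  then show ?thesis using chain_mem[OF T True \<open>j \<le> k\<close>] SX by auto
next
  case False
  then have "j = 0" by simp
  show ?thesis
  proof (cases "k = 0")
    case True
    then show ?thesis using chain_top[OF T] T SX \<open>j = 0\<close> by auto
  next
    case False
    then have "chain T 0 \<in> Fam 0" using chain_nearest(1)[OF T, of 1] by simp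
    then show ?thesis using family_zero \<open>j = 0\<close> by simp
  qed
qed

lemma card_chain_le:
  assumes fin: "finite X" and SX: "S \<subseteq> Pow X" and T: "T \<in> S" and "j \<le> k"
  shows "real (card (chain T j)) \<le> real (card T) + 2 * real (card X) / 2 ^ j"
  using \<open>j \<le> k\<close>
proof (induction j rule: inc_induct)
  case base
  then show ?case using chain_top[OF T] by simp
next
  case (step m)
  have m: "Suc m \<in> {1..k}" using step by auto
  have "finite (chain T (Suc m))" "finite (chain T m)"
    using chain_subset[OF SX T, of m] chain_subset[OF SX T, of "Suc m"] step.hyps fin
    by (simp_all add: finite_subset)
  then have "card (chain T m) \<le> card (chain T (Suc m)) + card (symdiff (chain T (Suc m)) (chain T m))"
    by (rule card_le_card_add_card_symdiff)
  then have "real (card (chain T m))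
      \<le> real (card (chain T (Suc m))) + real (card X) / 2 ^ m"
    using chain_step_symdiff_le[OF fin SX T m] by simp
  also have "\<dots> \<le> real (card T) + 2 * real (card X) / 2 ^ Suc m + real (card X) / 2 ^ m"
    using step.IH by simp
  also have "\<dots> = real (card T) + 2 * real (card X) / 2 ^ m" by simp
  finally show ?case .
qed

end

theorem mainTheorem6:
  shows "\<exists>c::real. c > 0 \<and>
    (\<forall>(X::'a set) S k Fam chain.
       finite X \<and> S \<subseteq> Pow X \<and> k \<ge> 1 \<and> card X = 2 ^ k \<and>
       valid_construction X S k Fam chain \<longrightarrow>
       (\<forall>i\<in>{1..k}. \<forall>j\<in>{i - 1..k}. \<forall>F\<in>chain_family X S chain i j.
          real (card F) \<le> c * real (card X) / 2 ^ (i - 1)))"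
proof (intro exI[of _ 3] conjI allI impI ballI)
  fix X :: "'a set" and S k Fam chain i j F
  assume H: "finite X \<and> S \<subseteq> Pow X \<and> 1 \<le> k \<and> card X = 2 ^ k \<and> valid_construction X S k Fam chain"
    and "i \<in> {1..k}" and j: "j \<in> {i - 1..k}" and F: "F \<in> chain_family X S chain i j"
  from F obtain T where T: "T \<in> size_class X S i" and FT: "F = chain T j"
    unfolding chain_family_def by blast
  have TS: "T \<in> S" and small: "real (card T) < real (card X) / 2 ^ (i - 1)"
    using T unfolding size_class_def by auto
  have "real (card F) \<le> real (card T) + 2 * real (card X) / 2 ^ j"
    using card_chain_le[of X S k Fam chain T j] H TS j FT by auto
  moreover have "real (card X) / 2 ^ j \<le> real (card X) / 2 ^ (i - 1)"
    using j by (intro divide_left_mono power_increasing) auto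
  ultimately show "real (card F) \<le> 3 * real (card X) / 2 ^ (i - 1)"
    using small by simp
qed simp

end
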